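(* Let $X$ be a topological space, $(Z,d)$ a metric space, $f_n:X\to Z$ ($n\in\mathbb N$) quasicontinuous mappings and $f:X\to Z$ a mapping such that for each $x\in X$, $f(x)$ is a cluster point of $(f_n(x))_{n\in\mathbb N}$. Then for each $n\in\mathbb N$ the set-valued mapping $X\ni x\mapsto\{f_m(x):m\ge n\}\cup\{f(x)\}\in 2^Z$ is lower quasicontinuous.
   Context: $2^Z$ is the set of nonempty subsets of $Z$. A mapping $g:X\to Z$ is quasicontinuous if for each $a\in X$, each neighborhood $U$ of $a$ and each neighborhood $W$ of $g(a)$ there is an open $O$ with $\emptyset\ne O\subset U$ and $g(O)\subset W$. A set-valued $F:X\to 2^Z$ is lower quasicontinuous if for each $x_0\in X$, each neighborhood $U$ of $x_0$ and each open $W\subset Z$ with $F(x_0)\cap W\ne\emptyset$, there is an open $O$ with $\emptyset\ne O\subset U$ and $F(x)\cap W\ne\emptyset$ for all $x\in O$. *)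

theory Defs
  imports "HOL-Analysis.Analysis"
begin

definition nhd :: "'a::topological_space set \<Rightarrow> 'a \<Rightarrow> bool" where
  "nhd U a \<longleftrightarrow> (\<exists>V. open V \<and> a \<in> V \<and> V \<subseteq> U)"

definition quasicontinuous :: "('a::topological_space \<Rightarrow> 'b::topological_space) \<Rightarrow> bool" where
  "quasicontinuous g \<longleftrightarrow>
     (\<forall>a U W. nhd U a \<longrightarrow> nhd W (g a) \<longrightarrow>
        (\<exists>G. open G \<and> G \<noteq> {} \<and> G \<subseteq> U \<and> g ` G \<subseteq> W))"

definition lower_quasicontinuous :: "('a::topological_space \<Rightarrow> 'b::topological_space set) \<Rightarrow> bool" where
  "lower_quasicontinuous F \<longleftrightarrow>
     (\<forall>x0 U W. nhd U x0 \<longrightarrow> open W \<longrightarrow> F x0 \<inter> W \<noteq> {} \<longrightarrow>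
        (\<exists>G. open G \<and> G \<noteq> {} \<and> G \<subseteq> U \<and> (\<forall>x\<in>G. F x \<inter> W \<noteq> {})))"

definition cluster_point_seq :: "'b::topological_space \<Rightarrow> (nat \<Rightarrow> 'b) \<Rightarrow> bool" where
  "cluster_point_seq z s \<longleftrightarrow> (\<forall>W. nhd W z \<longrightarrow> infinite {m. s m \<in> W})"

end

theory Submission
  imports Defs
begin

lemma nhd_open: "open W \<Longrightarrow> a \<in> W \<Longrightarrow> nhd W a"
  unfolding nhd_def by blast

lemma cluster_point_seq_tail:
  assumes "cluster_point_seq z s" "open W" "z \<in> W"
  shows "\<exists>m\<ge>n. s m \<in> W"
proof (rule ccontr)
  assume "\<not> (\<exists>m\<ge>n. s m \<in> W)"
  hence "{m. s m \<in> W} \<subseteq> {..<n}" by (auto simp: not_le)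
  hence "finite {m. s m \<in> W}" by (rule finite_subset) simp
  moreover have "infinite {m. s m \<in> W}"
    using assms(1)[unfolded cluster_point_seq_def, rule_format, OF nhd_open[OF assms(2,3)]] .
  ultimately show False by contradiction
qed

lemma lower_quasicontinuous_by_selections:
  fixes F :: "'a::topological_space \<Rightarrow> 'b::topological_space set"
  assumes selection: "\<And>x0 W. open W \<Longrightarrow> F x0 \<inter> W \<noteq> {} \<Longrightarrow>
      \<exists>g. quasicontinuous g \<and> g x0 \<in> W \<and> (\<forall>x. g x \<in> F x)"
  shows "lower_quasicontinuous F"
  unfolding lower_quasicontinuous_def
proof (intro allI impI)
  fix x0 U W
  assume U: "nhd U x0" and W: "open W" "F x0 \<inter> W \<noteq> {}"
  obtain g where g: "quasicontinuous g" "g x0 \<in> W" "\<And>x. g x \<in> F x"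
    using selection[OF W] by blast
  obtain G where G: "open G" "G \<noteq> {}" "G \<subseteq> U" "g ` G \<subseteq> W"
    using g(1)[unfolded quasicontinuous_def, rule_format, OF U nhd_open[OF W(1) g(2)]]
    by blast
  have "\<forall>x\<in>G. F x \<inter> W \<noteq> {}"
    using G(4) g(3) by blast
  with G show "\<exists>G. open G \<and> G \<noteq> {} \<and> G \<subseteq> U \<and> (\<forall>x\<in>G. F x \<inter> W \<noteq> {})"
    by blast
qed

theorem mainTheorem17:
  fixes fs :: "nat \<Rightarrow> 'a::topological_space \<Rightarrow> 'b::metric_space"
    and f :: "'a \<Rightarrow> 'b"
  assumes "\<And>n. quasicontinuous (fs n)"
    and "\<And>x. cluster_point_seq (f x) (\<lambda>m. fs m x)"
  shows "\<forall>n. lower_quasicontinuous (\<lambda>x. {fs m x | m. m \<ge> n} \<union> {f x})"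
proof
  fix n
  show "lower_quasicontinuous (\<lambda>x. {fs m x | m. m \<ge> n} \<union> {f x})"
  proof (rule lower_quasicontinuous_by_selections)
    fix x0 and W :: "'b set"
    assume W: "open W" "({fs m x0 | m. m \<ge> n} \<union> {f x0}) \<inter> W \<noteq> {}"
    have "\<exists>m\<ge>n. fs m x0 \<in> W"
    proof (cases "f x0 \<in> W")
      case True
      then show ?thesis using cluster_point_seq_tail[OF assms(2) W(1)] by blast
    next
      case False
      then show ?thesis using W(2) by auto
    qed
    then obtain m where m: "m \<ge> n" "fs m x0 \<in> W" by blast
    have "\<forall>x. fs m x \<in> {fs m x | m. m \<ge> n} \<union> {f x}"
      using m(1) by blast
    then show "\<exists>g. quasicontinuous g \<and> g x0 \<in> W \<and>
        (\<forall>x. g x \<in> {fs m x | m. m \<ge> n} \<union> {f x})"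
      using assms(1)[of m] m(2) by blast
  qed
qed

end
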